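(* Let $X\in\mathbb{R}^T$ and let $F=\{[s_m,e_m]\}_{m=1}^M$ be a collection of intervals with $1\le s_m<e_m\le T$. The set of change-point candidates (with their side information) produced by the recursive call $\textsc{WBS}(1,T,0)$ coincides with the set $\mathcal P$ produced by the non-recursive procedure described in the context (ties assumed absent). Moreover, if $(m_k)_{k=1}^{\tilde N}$ is the order in which tuples enter $\mathcal P$ in the non-recursive procedure, then the sequence $(|\tilde X_{s_{m_k},e_{m_k}}^{b_{m_k}}|)_{k=1}^{\tilde N}$ is non-increasing.
   Context: For $1\le s\le b<e\le T$ and $n=e-s+1$, the CUSUM statistic is $\tilde X_{s,e}^b=\sqrt{\frac{e-b}{n(b-s+1)}}\sum_{t=s}^b X_t-\sqrt{\frac{b-s+1}{n(e-b)}}\sum_{t=b+1}^e X_t$. Recursive WBS with threshold $\zeta$, $\textsc{WBS}(s,e,\zeta)$: if $e-s<1$ stop; otherwise let $\mathcal M_{s,e}$ be the set of indices $m$ with $[s_m,e_m]\subseteq[s,e]$; let $(m_0,b_{m_0})=\arg\max_{m\in\mathcal M_{s,e},\ b\in\{s_m,\ldots,e_m-1\}}|\tilde X_{s_m,e_m}^b|$; if $|\tilde X_{s_{m_0},e_{m_0}}^{b_{m_0}}|\ge\zeta$, record $b_{m_0}$ with side information $(m_0,s_{m_0},e_{m_0},|\tilde X_{s_{m_0},e_{m_0}}^{b_{m_0}}|)$ and call $\textsc{WBS}(s,b_{m_0},\zeta)$ and $\textsc{WBS}(b_{m_0}+1,e,\zeta)$; otherwise stop. (If $\mathcal M_{s,e}=\emptyset$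 nothing is recorded.) Non-recursive procedure: for each $m$ let $b_m=\arg\max_{b\in\{s_m,\ldots,e_m-1\}}|\tilde X_{s_m,e_m}^b|$. Initialise $\mathcal C=\{(m,s_m,e_m,b_m,|\tilde X_{s_m,e_m}^{b_m}|):m=1,\ldots,M\}$, $\mathcal P=\emptyset$. While $\mathcal C\ne\emptyset$: let $m_0$ maximise $|\tilde X_{s_m,e_m}^{b_m}|$ over tuples in $\mathcal C$, add its tuple to $\mathcal P$, and remove from $\mathcal C$ all tuples with $s_m\le b_{m_0}<e_m$. *)

theory Defs
  imports Complex_Main
begin

text \<open>Data X :: nat => real (only X 1, ..., X T matter); intervals [ss m, ee m], m = 1..M.\<close>

definition cusum :: "(nat \<Rightarrow> real) \<Rightarrow> nat \<Rightarrow> nat \<Rightarrow> nat \<Rightarrow> real" where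
  "cusum X s b e =
     (let n = real (e - s + 1) in
        sqrt (real (e - b) / (n * real (b - s + 1))) * (\<Sum>t=s..b. X t)
      - sqrt (real (b - s + 1) / (n * real (e - b))) * (\<Sum>t=Suc b..e. X t))"

definition cval :: "(nat \<Rightarrow> real) \<Rightarrow> (nat \<Rightarrow> nat) \<Rightarrow> (nat \<Rightarrow> nat) \<Rightarrow> nat \<Rightarrow> nat \<Rightarrow> real" where
  "cval X ss ee m b = \<bar>cusum X (ss m) b (ee m)\<bar>"

text \<open>Tuples (m, s_m, e_m, b, |value|).\<close>
type_synonym tup = "nat \<times> nat \<times> nat \<times> nat \<times> real"

definition tup_val :: "tup \<Rightarrow> real" where "tup_val t = snd (snd (snd (snd t)))"
definition tup_s :: "tup \<Rightarrow> nat" where "tup_s t = fst (snd t)"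
definition tup_e :: "tup \<Rightarrow> nat" where "tup_e t = fst (snd (snd t))"
definition tup_b :: "tup \<Rightarrow> nat" where "tup_b t = fst (snd (snd (snd t)))"

definition wbs_cands :: "(nat \<Rightarrow> nat) \<Rightarrow> (nat \<Rightarrow> nat) \<Rightarrow> nat \<Rightarrow> nat \<Rightarrow> nat \<Rightarrow> (nat \<times> nat) set" where
  "wbs_cands ss ee M s e =
     {(m, b). m \<in> {1..M} \<and> s \<le> ss m \<and> ee m \<le> e \<and> ss m \<le> b \<and> b < ee m}"

text \<open>The argmax (m0, b0); unique under the no-ties assumption.\<close>
definition wbs_choice :: "(nat \<Rightarrow> real) \<Rightarrow> (nat \<Rightarrow> nat) \<Rightarrow> (nat \<Rightarrow> nat) \<Rightarrow> nat \<Rightarrow> nat \<Rightarrow> nat \<Rightarrow> nat \<times> nat" where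
  "wbs_choice X ss ee M s e =
     (SOME p. is_arg_max (\<lambda>(m, b). cval X ss ee m b) (\<lambda>p. p \<in> wbs_cands ss ee M s e) p)"

text \<open>Recursive WBS(s,e,zeta): returns the set of recorded tuples.
  The guard s <= b0 < e is always true when the candidate set is nonempty;
  it only makes termination evident.\<close>
function wbs :: "(nat \<Rightarrow> real) \<Rightarrow> (nat \<Rightarrow> nat) \<Rightarrow> (nat \<Rightarrow> nat) \<Rightarrow> nat \<Rightarrow> real \<Rightarrow> nat \<Rightarrow> nat \<Rightarrow> tup set" where
  "wbs X ss ee M \<zeta> s e =
     (if e - s < 1 \<or> wbs_cands ss ee M s e = {} then {}
      else (let (m0, b0) = wbs_choice X ss ee M s e in
            if cval X ss ee m0 b0 \<ge> \<zeta> \<and> s \<le> b0 \<and> b0 < e then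
              insert (m0, ss m0, ee m0, b0, cval X ss ee m0 b0)
                (wbs X ss ee M \<zeta> s b0 \<union> wbs X ss ee M \<zeta> (Suc b0) e)
            else {}))"
  by pat_completeness auto
termination
  by (relation "measure (\<lambda>(X, ss, ee, M, \<zeta>, s, e). e - s)") auto

definition best_split :: "(nat \<Rightarrow> real) \<Rightarrow> (nat \<Rightarrow> nat) \<Rightarrow> (nat \<Rightarrow> nat) \<Rightarrow> nat \<Rightarrow> nat" where
  "best_split X ss ee m =
     (SOME b. is_arg_max (\<lambda>b. cval X ss ee m b) (\<lambda>b. b \<in> {ss m..<ee m}) b)"

definition init_cands :: "(nat \<Rightarrow> real) \<Rightarrow> (nat \<Rightarrow> nat) \<Rightarrow> (nat \<Rightarrow> nat) \<Rightarrow> nat \<Rightarrow> tup set" where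
  "init_cands X ss ee M =
     (\<lambda>m. (m, ss m, ee m, best_split X ss ee m, cval X ss ee m (best_split X ss ee m))) ` {1..M}"

definition pick_max :: "tup set \<Rightarrow> tup" where
  "pick_max C = (SOME t. is_arg_max tup_val (\<lambda>t. t \<in> C) t)"

text \<open>Main loop; returns P as a list in order of insertion. Guard ensures
  termination (it holds automatically for the candidate sets used).\<close>
function nonrec_loop :: "tup set \<Rightarrow> tup list" where
  "nonrec_loop C =
     (if C = {} \<or> infinite C then []
      else (let t = pick_max C in
            if t \<in> C \<and> tup_s t \<le> tup_b t \<and> tup_b t < tup_e t then
              t # nonrec_loop (C - {u \<in> C. tup_s u \<le> tup_b t \<and> tup_b t < tup_e u})
            else []))"
  by pat_completeness auto
termination
proof (relation "measure card")
  fix C :: "tup set" and t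
  assume "\<not> (C = {} \<or> infinite C)" "t = pick_max C"
     "t \<in> C \<and> tup_s t \<le> tup_b t \<and> tup_b t < tup_e t"
  then show "(C - {u \<in> C. tup_s u \<le> tup_b t \<and> tup_b t < tup_e u}, C) \<in> measure card"
    by (auto intro!: psubset_card_mono)
qed auto

definition nonrec_wbs :: "(nat \<Rightarrow> real) \<Rightarrow> (nat \<Rightarrow> nat) \<Rightarrow> (nat \<Rightarrow> nat) \<Rightarrow> nat \<Rightarrow> tup list" where
  "nonrec_wbs X ss ee M = nonrec_loop (init_cands X ss ee M)"

end

theory Submission
  imports Defs
begin

text \<open>Without ties, the pair chosen by the recursive call on \<open>[s, e]\<close> is the largest of the
  tuples \<open>(m, s\<^sub>m, e\<^sub>m, b\<^sub>m, |X\<^sup>~|)\<close> of the intervals inside \<open>[s, e]\<close>, so it is also the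
  first tuple the greedy procedure takes from that candidate set. Discarding the intervals
  containing its split point \<open>b\<close> leaves exactly the intervals inside \<open>[s, b]\<close> and inside
  \<open>[b + 1, e]\<close>. No split point of one of these families lies in an interval of the other, so
  the greedy procedure on their union merely interleaves its runs on the two families, and
  induction on \<open>e - s\<close> matches it with the two recursive calls. The values come out
  non-increasing because each selected tuple is maximal in a set containing all later ones.\<close>

declare nonrec_loop.simps[simp del] wbs.simps[simp del]

lemma arg_max_on_if_finite:
  fixes f :: "'a \<Rightarrow> 'b::linorder"
  assumes "finite A" "A \<noteq> {}"
  shows "arg_max_on f A \<in> A" and "\<And>y. y \<in> A \<Longrightarrow> f y \<le> f (arg_max_on f A)"
proof -
  have "Max (f ` A) \<in> f ` A" using assms by simp
  then obtain x where "x \<in> A" "f x = Max (f ` A)" by (metis imageE)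
  then have "is_arg_max f (\<lambda>x. x \<in> A) x"
    using assms by (auto simp: is_arg_max_linorder)
  then have "is_arg_max f (\<lambda>x. x \<in> A) (arg_max_on f A)"
    unfolding arg_max_on_def arg_max_def by (rule someI)
  then show "arg_max_on f A \<in> A" "\<And>y. y \<in> A \<Longrightarrow> f y \<le> f (arg_max_on f A)"
    by (auto simp: is_arg_max_linorder)
qed

subsection \<open>The greedy procedure\<close>

definition covers :: "tup \<Rightarrow> nat \<Rightarrow> bool" where
  "covers t b \<longleftrightarrow> tup_s t \<le> b \<and> b < tup_e t"

definition cands_avoiding :: "tup set \<Rightarrow> nat \<Rightarrow> tup set" where
  "cands_avoiding C b = {u \<in> C. \<not> covers u b}"

lemma cands_avoiding_eq_Diff: "cands_avoiding C b = C - {u \<in> C. tup_s u \<le> b \<and> b < tup_e u}"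
  by (auto simp: cands_avoiding_def covers_def)

definition valid_cands :: "tup set \<Rightarrow> bool" where
  "valid_cands C \<longleftrightarrow> finite C \<and> (\<forall>t\<in>C. covers t (tup_b t)) \<and> inj_on tup_val C"

lemma valid_cands_subset: "valid_cands C \<Longrightarrow> C' \<subseteq> C \<Longrightarrow> valid_cands C'"
  unfolding valid_cands_def by (meson finite_subset inj_on_subset subsetD)

lemma cands_avoiding_subset: "cands_avoiding C b \<subseteq> C"
  by (auto simp: cands_avoiding_def)

lemma valid_cands_avoiding: "valid_cands C \<Longrightarrow> valid_cands (cands_avoiding C b)"
  using valid_cands_subset cands_avoiding_subset by blast

lemma pick_max_eq_arg_max_on: "pick_max C = arg_max_on tup_val C"
  unfolding pick_max_def arg_max_on_def arg_max_def ..

lemma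
  assumes "valid_cands C" "C \<noteq> {}"
  shows pick_max_in: "pick_max C \<in> C"
    and pick_max_ge: "u \<in> C \<Longrightarrow> tup_val u \<le> tup_val (pick_max C)"
  using arg_max_on_if_finite[where A = C and f = tup_val] assms
  unfolding pick_max_eq_arg_max_on valid_cands_def by auto

lemma pick_max_eqI:
  assumes "valid_cands C" "t \<in> C" "\<And>u. u \<in> C \<Longrightarrow> tup_val u \<le> tup_val t"
  shows "pick_max C = t"
proof -
  have "tup_val (pick_max C) = tup_val t"
    using assms pick_max_in pick_max_ge by (metis empty_iff order_antisym)
  then show ?thesis
    using assms(1,2) pick_max_in[of C] unfolding valid_cands_def by (auto dest: inj_onD)
qed

lemma nonrec_loop_empty: "nonrec_loop {} = []"
  by (subst nonrec_loop.simps) simp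

lemma nonrec_loop_unfold:
  assumes "valid_cands C" "C \<noteq> {}"
  shows "nonrec_loop C = pick_max C # nonrec_loop (cands_avoiding C (tup_b (pick_max C)))"
proof -
  have "pick_max C \<in> C" using assms by (rule pick_max_in)
  moreover from this have "covers (pick_max C) (tup_b (pick_max C))"
    using assms(1) by (simp add: valid_cands_def)
  ultimately show ?thesis
    using assms
    by (subst nonrec_loop.simps) (simp add: Let_def valid_cands_def covers_def cands_avoiding_eq_Diff)
qed

lemma valid_cands_induct [consumes 1, case_names empty pick]:
  assumes "valid_cands C"
    and "P {}"
    and "\<And>C. valid_cands C \<Longrightarrow> C \<noteq> {} \<Longrightarrow> P (cands_avoiding C (tup_b (pick_max C))) \<Longrightarrow> P C"
  shows "P C"
  using assms(1)
proof (induction C rule: nonrec_loop.induct)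
  case (1 C)
  show ?case
  proof (cases "C = {}")
    case True
    with assms(2) show ?thesis by simp
  next
    case False
    have valid': "valid_cands (cands_avoiding C (tup_b (pick_max C)))"
      using "1.prems" by (rule valid_cands_avoiding)
    have "pick_max C \<in> C" using "1.prems" False by (rule pick_max_in)
    with "1.prems" False have "P (cands_avoiding C (tup_b (pick_max C)))"
      unfolding cands_avoiding_eq_Diff
      by (intro "1.IH"[OF _ refl _ valid'[unfolded cands_avoiding_eq_Diff]])
        (auto simp: valid_cands_def covers_def)
    with "1.prems" False show ?thesis by (rule assms(3))
  qed
qed

lemma set_nonrec_loop_subset: "valid_cands C \<Longrightarrow> set (nonrec_loop C) \<subseteq> C"
proof (induction C rule: valid_cands_induct)
  case empty
  show ?case by (simp add: nonrec_loop_empty)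
next
  case (pick C)
  then show ?case
    using pick_max_in[of C] cands_avoiding_subset[of C] by (auto simp: nonrec_loop_unfold)
qed

lemma sorted_nonrec_loop:
  "valid_cands C \<Longrightarrow> sorted_wrt (\<lambda>t u. tup_val u \<le> tup_val t) (nonrec_loop C)"
proof (induction C rule: valid_cands_induct)
  case empty
  show ?case by (simp add: nonrec_loop_empty)
next
  case (pick C)
  have "set (nonrec_loop (cands_avoiding C (tup_b (pick_max C)))) \<subseteq> C"
    using set_nonrec_loop_subset[OF valid_cands_avoiding[OF pick.hyps(1)]] cands_avoiding_subset
    by blast
  with pick show ?case
    by (auto simp: nonrec_loop_unfold intro: pick_max_ge)
qed

definition separated :: "tup set \<Rightarrow> tup set \<Rightarrow> bool" where
  "separated A B \<longleftrightarrow> (\<forall>a\<in>A. \<forall>b\<in>B. \<not> covers b (tup_b a) \<and> \<not> covers a (tup_b b))"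

lemma separated_sym: "separated A B \<Longrightarrow> separated B A"
  unfolding separated_def by blast

lemma separated_subset: "separated A B \<Longrightarrow> A' \<subseteq> A \<Longrightarrow> separated A' B"
  unfolding separated_def by blast

lemma nonrec_loop_Un_pick_left:
  assumes valid: "valid_cands (A \<union> B)" and sep: "separated A B"
    and t: "t = pick_max (A \<union> B)" "t \<in> A"
  shows "nonrec_loop (A \<union> B) = t # nonrec_loop (cands_avoiding A (tup_b t) \<union> B)"
    and "nonrec_loop A = t # nonrec_loop (cands_avoiding A (tup_b t))"
proof -
  have "\<not> covers u (tup_b t)" if "u \<in> B" for u
    using sep t(2) that unfolding separated_def by blast
  then have "cands_avoiding (A \<union> B) (tup_b t) = cands_avoiding A (tup_b t) \<union> B"
    by (auto simp: cands_avoiding_def)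
  then show "nonrec_loop (A \<union> B) = t # nonrec_loop (cands_avoiding A (tup_b t) \<union> B)"
    using nonrec_loop_unfold[OF valid] t by auto
  have "valid_cands A" using valid by (rule valid_cands_subset) blast
  moreover have "pick_max A = t"
    using valid_cands_subset[OF valid] pick_max_ge[OF valid] t by (intro pick_max_eqI) blast+
  ultimately show "nonrec_loop A = t # nonrec_loop (cands_avoiding A (tup_b t))"
    using nonrec_loop_unfold t(2) by fastforce
qed

lemma set_nonrec_loop_Un:
  "valid_cands (A \<union> B) \<Longrightarrow> separated A B \<Longrightarrow>
     set (nonrec_loop (A \<union> B)) = set (nonrec_loop A) \<union> set (nonrec_loop B)"
proof (induction "card (A \<union> B)" arbitrary: A B rule: less_induct)
  case less
  have step: "set (nonrec_loop (A' \<union> B')) = set (nonrec_loop A') \<union> set (nonrec_loop B')"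
    if AB': "A' \<union> B' = A \<union> B" and sep: "separated A' B'" and t: "pick_max (A \<union> B) \<in> A'"
    for A' B'
  proof -
    define t where "t = pick_max (A' \<union> B')"
    have valid: "valid_cands (A' \<union> B')" using less.prems(1) AB' by simp
    have "t \<in> A'" using t AB' t_def by simp
    note unfold = nonrec_loop_Un_pick_left[OF valid sep t_def this]
    have "covers t (tup_b t)" using valid \<open>t \<in> A'\<close> unfolding valid_cands_def by blast
    then have "t \<notin> cands_avoiding A' (tup_b t) \<union> B'"
      using sep \<open>t \<in> A'\<close> unfolding separated_def cands_avoiding_def by blast
    then have "cands_avoiding A' (tup_b t) \<union> B' \<subset> A \<union> B"
      using AB' \<open>t \<in> A'\<close> cands_avoiding_subset by blast
    then have "card (cands_avoiding A' (tup_b t) \<union> B') < card (A \<union> B)"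
      using less.prems(1) by (intro psubset_card_mono) (auto simp: valid_cands_def)
    moreover have "valid_cands (cands_avoiding A' (tup_b t) \<union> B')"
      using valid by (rule valid_cands_subset) (use cands_avoiding_subset in blast)
    moreover have "separated (cands_avoiding A' (tup_b t)) B'"
      using sep cands_avoiding_subset by (rule separated_subset)
    ultimately show ?thesis
      using less.hyps unfold by auto
  qed
  show ?case
  proof (cases "A \<union> B = {}")
    case True
    then show ?thesis by (simp add: nonrec_loop_empty)
  next
    case False
    then have "pick_max (A \<union> B) \<in> A \<or> pick_max (A \<union> B) \<in> B"
      using pick_max_in[OF less.prems(1)] by blast
    then show ?thesis
      using step[of A B] step[of B A] less.prems(2) separated_sym by (auto simp: Un_commute)
  qed
qed

subsection \<open>Matching the recursive procedure\<close>

definition interval_tup :: "(nat \<Rightarrow> real) \<Rightarrow> (nat \<Rightarrow> nat) \<Rightarrow> (nat \<Rightarrow> nat) \<Rightarrow> nat \<Rightarrow> tup" where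
  "interval_tup X ss ee m =
     (m, ss m, ee m, best_split X ss ee m, cval X ss ee m (best_split X ss ee m))"

definition intervals_within :: "(nat \<Rightarrow> nat) \<Rightarrow> (nat \<Rightarrow> nat) \<Rightarrow> nat \<Rightarrow> nat \<Rightarrow> nat \<Rightarrow> nat set" where
  "intervals_within ss ee M s e = {m \<in> {1..M}. s \<le> ss m \<and> ee m \<le> e}"

lemma interval_tup_simps [simp]:
  "tup_s (interval_tup X ss ee m) = ss m"
  "tup_e (interval_tup X ss ee m) = ee m"
  "tup_b (interval_tup X ss ee m) = best_split X ss ee m"
  "tup_val (interval_tup X ss ee m) = cval X ss ee m (best_split X ss ee m)"
  unfolding interval_tup_def tup_s_def tup_e_def tup_b_def tup_val_def by simp_all

lemma intervals_within_subset: "intervals_within ss ee M s e \<subseteq> {1..M}"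
  by (auto simp: intervals_within_def)

lemma cands_avoiding_image_interval_tup:
  "cands_avoiding (interval_tup X ss ee ` S) b =
     interval_tup X ss ee ` {m \<in> S. \<not> (ss m \<le> b \<and> b < ee m)}"
  by (auto simp: cands_avoiding_def covers_def)

lemma intervals_within_split:
  assumes "s \<le> b" "b \<le> e"
  shows "{m \<in> intervals_within ss ee M s e. \<not> (ss m \<le> b \<and> b < ee m)} =
           intervals_within ss ee M s b \<union> intervals_within ss ee M (Suc b) e"
  using assms by (auto simp: intervals_within_def)

context
  fixes X :: "nat \<Rightarrow> real" and ss ee :: "nat \<Rightarrow> nat" and M T :: nat
  assumes intervals: "\<forall>m\<in>{1..M}. 1 \<le> ss m \<and> ss m < ee m \<and> ee m \<le> T"
    and no_ties: "\<forall>m\<in>{1..M}. \<forall>b\<in>{ss m..<ee m}. \<forall>m'\<in>{1..M}. \<forall>b'\<in>{ss m'..<ee m'}.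
                    (m, b) \<noteq> (m', b') \<longrightarrow> cval X ss ee m b \<noteq> cval X ss ee m' b'"
begin

lemma cval_eqD:
  assumes "m \<in> {1..M}" "b \<in> {ss m..<ee m}" "m' \<in> {1..M}" "b' \<in> {ss m'..<ee m'}"
    and "cval X ss ee m b = cval X ss ee m' b'"
  shows "m = m'" and "b = b'"
  using no_ties assms by blast+

lemma
  assumes "m \<in> {1..M}"
  shows best_split_in: "best_split X ss ee m \<in> {ss m..<ee m}"
    and best_split_ge:
      "b \<in> {ss m..<ee m} \<Longrightarrow> cval X ss ee m b \<le> cval X ss ee m (best_split X ss ee m)"
proof -
  have "best_split X ss ee m = arg_max_on (cval X ss ee m) {ss m..<ee m}"
    unfolding best_split_def arg_max_on_def arg_max_def ..
  moreover have "{ss m..<ee m} \<noteq> {}" using intervals assms by auto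
  ultimately show "best_split X ss ee m \<in> {ss m..<ee m}"
    and "b \<in> {ss m..<ee m} \<Longrightarrow> cval X ss ee m b \<le> cval X ss ee m (best_split X ss ee m)"
    using arg_max_on_if_finite[where A = "{ss m..<ee m}"] by simp_all
qed

lemma valid_cands_interval_tups:
  assumes "S \<subseteq> {1..M}"
  shows "valid_cands (interval_tup X ss ee ` S)"
  unfolding valid_cands_def
proof (intro conjI ballI inj_onI)
  show "finite (interval_tup X ss ee ` S)"
    using assms finite_subset by blast
next
  fix t assume "t \<in> interval_tup X ss ee ` S"
  then obtain m where "m \<in> S" "t = interval_tup X ss ee m" by blast
  then show "covers t (tup_b t)"
    using assms best_split_in[of m] by (auto simp: covers_def)
next
  fix t u assume "t \<in> interval_tup X ss ee ` S" "u \<in> interval_tup X ss ee ` S"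
    and val: "tup_val t = tup_val u"
  then obtain m m' where m: "m \<in> S" "t = interval_tup X ss ee m"
    and m': "m' \<in> S" "u = interval_tup X ss ee m'" by blast
  have range: "m \<in> {1..M}" "m' \<in> {1..M}" using m m' assms by auto
  moreover have "cval X ss ee m (best_split X ss ee m) = cval X ss ee m' (best_split X ss ee m')"
    using m m' val by simp
  ultimately have "m = m'"
    using best_split_in cval_eqD(1) by blast
  then show "t = u" using m m' by simp
qed

lemma separated_interval_tups:
  "separated (interval_tup X ss ee ` intervals_within ss ee M s b)
     (interval_tup X ss ee ` intervals_within ss ee M (Suc b) e)"
  unfolding separated_def
proof (intro ballI)
  fix t u
  assume "t \<in> interval_tup X ss ee ` intervals_within ss ee M s b"
    and "u \<in> interval_tup X ss ee ` intervals_within ss ee M (Suc b) e"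
  then obtain m m' where m: "m \<in> intervals_within ss ee M s b" "t = interval_tup X ss ee m"
    and m': "m' \<in> intervals_within ss ee M (Suc b) e" "u = interval_tup X ss ee m'"
    by blast
  have "best_split X ss ee m < ee m" "ss m' \<le> best_split X ss ee m'"
    using best_split_in m(1) m'(1) intervals_within_subset by fastforce+
  moreover have "ee m \<le> b" "b < ss m'"
    using m(1) m'(1) by (auto simp: intervals_within_def)
  ultimately show "\<not> covers u (tup_b t) \<and> \<not> covers t (tup_b u)"
    using m(2) m'(2) by (simp add: covers_def)
qed

lemma wbs_choice_interval_tup:
  assumes ne: "intervals_within ss ee M s e \<noteq> {}"
    and choice: "wbs_choice X ss ee M s e = (m0, b0)"
  shows "m0 \<in> intervals_within ss ee M s e" and "b0 = best_split X ss ee m0"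
    and "pick_max (interval_tup X ss ee ` intervals_within ss ee M s e) = interval_tup X ss ee m0"
proof -
  let ?cands = "wbs_cands ss ee M s e" and ?val = "\<lambda>(m, b). cval X ss ee m b"
  have best_split_cand: "(m, best_split X ss ee m) \<in> ?cands"
    if "m \<in> intervals_within ss ee M s e" for m
    using that best_split_in[of m] by (auto simp: intervals_within_def wbs_cands_def)
  have "finite ?cands"
    by (rule finite_subset[of _ "{1..M} \<times> {..e}"]) (auto simp: wbs_cands_def)
  moreover have "?cands \<noteq> {}" using ne best_split_cand by blast
  ultimately have arg_max: "arg_max_on ?val ?cands \<in> ?cands"
    "\<And>y. y \<in> ?cands \<Longrightarrow> ?val y \<le> ?val (arg_max_on ?val ?cands)"
    by (rule arg_max_on_if_finite)+
  have arg_max_eq: "arg_max_on ?val ?cands = (m0, b0)"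
    using choice unfolding wbs_choice_def arg_max_on_def arg_max_def .
  have cand: "(m0, b0) \<in> ?cands"
    using arg_max(1) unfolding arg_max_eq .
  have max: "cval X ss ee m b \<le> cval X ss ee m0 b0" if "(m, b) \<in> ?cands" for m b
    using arg_max(2)[OF that] unfolding arg_max_eq by simp
  from cand have range: "m0 \<in> {1..M}" "b0 \<in> {ss m0..<ee m0}"
    and m0: "m0 \<in> intervals_within ss ee M s e"
    by (simp_all add: wbs_cands_def intervals_within_def)
  then show "m0 \<in> intervals_within ss ee M s e" by simp
  have "cval X ss ee m0 b0 = cval X ss ee m0 (best_split X ss ee m0)"
    using best_split_ge[OF range] max[OF best_split_cand[OF m0]] by (rule order_antisym)
  then show b0: "b0 = best_split X ss ee m0"
    by (rule cval_eqD(2)[OF range range(1) best_split_in[OF range(1)]])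
  have "tup_val u \<le> tup_val (interval_tup X ss ee m0)"
    if "u \<in> interval_tup X ss ee ` intervals_within ss ee M s e" for u
    using that max best_split_cand b0 by fastforce
  with m0 show
    "pick_max (interval_tup X ss ee ` intervals_within ss ee M s e) = interval_tup X ss ee m0"
    by (intro pick_max_eqI valid_cands_interval_tups intervals_within_subset imageI)
qed

lemma wbs_unfold:
  assumes ne: "intervals_within ss ee M s e \<noteq> {}"
    and choice: "wbs_choice X ss ee M s e = (m0, b0)"
  shows "wbs X ss ee M 0 s e =
           insert (interval_tup X ss ee m0) (wbs X ss ee M 0 s b0 \<union> wbs X ss ee M 0 (Suc b0) e)"
proof -
  have m0: "m0 \<in> intervals_within ss ee M s e" and b0: "b0 = best_split X ss ee m0"
    using wbs_choice_interval_tup[OF assms] by simp_all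
  then have "(m0, b0) \<in> wbs_cands ss ee M s e" "s \<le> b0" "b0 < e"
    using best_split_in[of m0] by (auto simp: intervals_within_def wbs_cands_def)
  then have "\<not> e - s < 1" "wbs_cands ss ee M s e \<noteq> {}" by auto
  with choice b0 \<open>s \<le> b0\<close> \<open>b0 < e\<close> show ?thesis
    by (subst wbs.simps) (simp add: interval_tup_def cval_def)
qed

lemma set_nonrec_loop_eq_wbs:
  "set (nonrec_loop (interval_tup X ss ee ` intervals_within ss ee M s e)) = wbs X ss ee M 0 s e"
proof (induction "e - s" arbitrary: s e rule: less_induct)
  case less
  let ?C = "\<lambda>s e. interval_tup X ss ee ` intervals_within ss ee M s e"
  show ?case
  proof (cases "intervals_within ss ee M s e = {}")
    case True
    then have "wbs_cands ss ee M s e = {}"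
      by (auto simp: intervals_within_def wbs_cands_def)
    with True show ?thesis
      by (subst wbs.simps) (simp add: nonrec_loop_empty)
  next
    case False
    obtain m0 b0 where choice: "wbs_choice X ss ee M s e = (m0, b0)" by fastforce
    note m0 = wbs_choice_interval_tup[OF False choice]
    have bounds: "s \<le> b0" "b0 < e"
      using m0 best_split_in[of m0] by (auto simp: intervals_within_def)
    have valid: "valid_cands (?C s e)" and valid': "valid_cands (?C s b0 \<union> ?C (Suc b0) e)"
      unfolding image_Un[symmetric]
      by (rule valid_cands_interval_tups, use intervals_within_subset in blast)+
    have "cands_avoiding (?C s e) (tup_b (pick_max (?C s e))) = ?C s b0 \<union> ?C (Suc b0) e"
      using m0 bounds intervals_within_split[of s b0 e ss ee M]
      by (simp add: cands_avoiding_image_interval_tup image_Un)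
    then have "nonrec_loop (?C s e) =
        interval_tup X ss ee m0 # nonrec_loop (?C s b0 \<union> ?C (Suc b0) e)"
      using nonrec_loop_unfold[OF valid] False m0(3) by simp
    then have "set (nonrec_loop (?C s e)) = insert (interval_tup X ss ee m0)
        (set (nonrec_loop (?C s b0)) \<union> set (nonrec_loop (?C (Suc b0) e)))"
      using set_nonrec_loop_Un[OF valid' separated_interval_tups] by simp
    also have "\<dots> = wbs X ss ee M 0 s e"
      using less bounds wbs_unfold[OF False choice] by simp
    finally show ?thesis .
  qed
qed

lemma init_cands_eq_interval_tups:
  "init_cands X ss ee M = interval_tup X ss ee ` intervals_within ss ee M 1 T"
  using intervals by (auto simp: init_cands_def interval_tup_def intervals_within_def)

end

theorem mainTheorem8:
  fixes X :: "nat \<Rightarrow> real" and ss ee :: "nat \<Rightarrow> nat" and M T :: nat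
  assumes intervals: "\<forall>m\<in>{1..M}. 1 \<le> ss m \<and> ss m < ee m \<and> ee m \<le> T"
    and no_ties: "\<forall>m\<in>{1..M}. \<forall>b\<in>{ss m..<ee m}. \<forall>m'\<in>{1..M}. \<forall>b'\<in>{ss m'..<ee m'}.
                    (m, b) \<noteq> (m', b') \<longrightarrow> cval X ss ee m b \<noteq> cval X ss ee m' b'"
  shows "wbs X ss ee M 0 1 T = set (nonrec_wbs X ss ee M)
       \<and> (\<forall>k. Suc k < length (nonrec_wbs X ss ee M) \<longrightarrow>
              tup_val (nonrec_wbs X ss ee M ! Suc k) \<le> tup_val (nonrec_wbs X ss ee M ! k))"
proof -
  note init = init_cands_eq_interval_tups[OF intervals no_ties]
  have "valid_cands (init_cands X ss ee M)"
    unfolding init by (rule valid_cands_interval_tups[OF intervals no_ties intervals_within_subset])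
  then have "sorted_wrt (\<lambda>t u. tup_val u \<le> tup_val t) (nonrec_wbs X ss ee M)"
    unfolding nonrec_wbs_def by (rule sorted_nonrec_loop)
  moreover have "wbs X ss ee M 0 1 T = set (nonrec_wbs X ss ee M)"
    using set_nonrec_loop_eq_wbs[OF intervals no_ties] unfolding nonrec_wbs_def init by simp
  ultimately show ?thesis
    using sorted_wrt_nth_less[of _ "nonrec_wbs X ss ee M"] by blast
qed

end
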